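(* Let $X$ be a Hausdorff space. Then every compact subset of $X$ is finite (i.e. $\mathcal{K}(X)=\mathcal{F}(X)$) if and only if every compact subset of $\mathcal{K}(X)$ is finite (i.e. $\mathcal{K}(\mathcal{K}(X))=\mathcal{F}(\mathcal{K}(X))$).
   Context: $\mathcal{K}(X)$ is the set of nonempty compact subsets of $X$ with the Vietoris topology (generated by $U^+=\{A: A\subset U\}$ and $U^-=\{A: A\cap U\neq\emptyset\}$ for $U$ open in $X$); $\mathcal{F}(X)$ is its subset of nonempty finite sets. *)

theory Defs
  imports "HOL-Analysis.Analysis"
begin

definition compact_sets :: "'a topology \<Rightarrow> 'a set set" where
  "compact_sets X = {K. K \<noteq> {} \<and> compactin X K}"

definition vietoris :: "'a topology \<Rightarrow> 'a set topology" where
  "vietoris X = subtopology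
     (topology_generated_by
        ({{A. A \<subseteq> U} | U. openin X U} \<union> {{A. A \<inter> U \<noteq> {}} | U. openin X U}))
     (compact_sets X)"

end

theory Submission
  imports Defs
begin

(* If \<K> is compact in K(X), then so is
   its union in X: cover each member of \<K> by finitely many of the given open sets;
   the Vietoris-open sets of compacta lying inside these finite unions cover \<K>,
   and a finite subcover of them yields a finite subcover of the union.  So if
   compacta of X are finite, \<K> is a family of subsets of a finite set.
   Conversely, x \<mapsto> {x} is a continuous injection of X into K(X), mapping a
   compact set of X onto a compact set of K(X). *)

definition vietoris_subbase :: "'a topology \<Rightarrow> 'a set set set" where
  "vietoris_subbase X =
     {{A. A \<subseteq> U} | U. openin X U} \<union> {{A. A \<inter> U \<noteq> {}} | U. openin X U}"

lemma vietoris_eq_subtopology_generated: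
  "vietoris X = subtopology (topology_generated_by (vietoris_subbase X)) (compact_sets X)"
  by (simp add: vietoris_def vietoris_subbase_def)

lemma subsets_topspace_in_vietoris_subbase:
  "{A. A \<subseteq> topspace X} \<in> vietoris_subbase X"
  by (auto simp: vietoris_subbase_def)

lemma topspace_vietoris: "topspace (vietoris X) = compact_sets X"
proof -
  have "compact_sets X \<subseteq> {A. A \<subseteq> topspace X}"
    by (auto simp: compact_sets_def dest: compactin_subset_topspace)
  also have "\<dots> \<subseteq> \<Union>(vietoris_subbase X)"
    using subsets_topspace_in_vietoris_subbase by blast
  finally show ?thesis
    by (simp add: vietoris_eq_subtopology_generated Int_absorb1)
qed

lemma openin_vietoris_upper:
  assumes "openin X U"
  shows "openin (vietoris X) {A \<in> compact_sets X. A \<subseteq> U}"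
proof -
  have "openin (topology_generated_by (vietoris_subbase X)) {A. A \<subseteq> U}"
    using assms by (intro topology_generated_by_Basis) (auto simp: vietoris_subbase_def)
  then show ?thesis
    unfolding vietoris_eq_subtopology_generated openin_subtopology by blast
qed

lemma continuous_map_singleton_vietoris: "continuous_map X (vietoris X) (\<lambda>x. {x})"
  unfolding vietoris_eq_subtopology_generated
proof (rule continuous_map_into_subtopology)
  show "continuous_map X (topology_generated_by (vietoris_subbase X)) (\<lambda>x. {x})"
  proof (rule continuous_on_generated_topo)
    fix S assume "S \<in> vietoris_subbase X"
    then obtain U where U: "openin X U" "S = {A. A \<subseteq> U} \<or> S = {A. A \<inter> U \<noteq> {}}"
      by (auto simp: vietoris_subbase_def)
    then have "(\<lambda>x. {x}) -` S \<inter> topspace X = U"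
      using openin_subset by auto
    with U show "openin X ((\<lambda>x. {x}) -` S \<inter> topspace X)" by simp
  next
    show "(\<lambda>x. {x}) ` topspace X \<subseteq> \<Union>(vietoris_subbase X)"
      using subsets_topspace_in_vietoris_subbase by blast
  qed
  show "(\<lambda>x. {x}) \<in> topspace X \<rightarrow> compact_sets X"
    by (auto simp: compact_sets_def)
qed

lemma compactin_Union_vietoris:
  assumes compact: "compactin (vietoris X) \<K>"
  shows "compactin X (\<Union>\<K>)"
proof -
  have members: "\<K> \<subseteq> compact_sets X"
    using compactin_subset_topspace[OF compact] by (simp add: topspace_vietoris)
  show ?thesis
    unfolding compactin_def
  proof (intro conjI allI impI)
    show "\<Union>\<K> \<subseteq> topspace X"
      using members by (auto simp: compact_sets_def dest: compactin_subset_topspace)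
  next
    fix \<U> assume "(\<forall>U\<in>\<U>. openin X U) \<and> \<Union>\<K> \<subseteq> \<Union>\<U>"
    then have open_\<U>: "\<And>U. U \<in> \<U> \<Longrightarrow> openin X U" and cover: "\<Union>\<K> \<subseteq> \<Union>\<U>"
      by auto
    have "\<exists>\<F>. finite \<F> \<and> \<F> \<subseteq> \<U> \<and> A \<subseteq> \<Union>\<F>" if "A \<in> \<K>" for A
      using that members cover by (intro compactinD[OF _ open_\<U>]) (auto simp: compact_sets_def)
    then obtain \<F> where \<F>: "\<And>A. A \<in> \<K> \<Longrightarrow> finite (\<F> A) \<and> \<F> A \<subseteq> \<U> \<and> A \<subseteq> \<Union>(\<F> A)"
      by metis
    define W where "W A = {B \<in> compact_sets X. B \<subseteq> \<Union>(\<F> A)}" for A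
    have "openin (vietoris X) (W A)" if "A \<in> \<K>" for A
      unfolding W_def using \<F>[OF that] open_\<U> by (intro openin_vietoris_upper) blast
    moreover have "\<K> \<subseteq> \<Union>(W ` \<K>)"
      using \<F> members unfolding W_def by blast
    ultimately obtain \<G> where "finite \<G>" "\<G> \<subseteq> W ` \<K>" "\<K> \<subseteq> \<Union>\<G>"
      using compactinD[OF compact, of "W ` \<K>"] by blast
    then obtain \<H> where \<H>: "\<H> \<subseteq> \<K>" "finite \<H>" "\<K> \<subseteq> \<Union>(W ` \<H>)"
      by (metis finite_subset_image)
    show "\<exists>\<F>'. finite \<F>' \<and> \<F>' \<subseteq> \<U> \<and> \<Union>\<K> \<subseteq> \<Union>\<F>'"
    proof (intro exI conjI)
      show "finite (\<Union>(\<F> ` \<H>))" "\<Union>(\<F> ` \<H>) \<subseteq> \<U>"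
        using \<H> \<F> by auto
      show "\<Union>\<K> \<subseteq> \<Union>(\<Union>(\<F> ` \<H>))"
        using \<H>(3) unfolding W_def by blast
    qed
  qed
qed

theorem proposition4p7:
  fixes X :: "'a topology"
  assumes "Hausdorff_space X"
  shows "(\<forall>K. compactin X K \<longrightarrow> finite K) \<longleftrightarrow>
         (\<forall>\<K>. compactin (vietoris X) \<K> \<longrightarrow> finite \<K>)"
proof
  assume "\<forall>K. compactin X K \<longrightarrow> finite K"
  then show "\<forall>\<K>. compactin (vietoris X) \<K> \<longrightarrow> finite \<K>"
    by (metis compactin_Union_vietoris finite_UnionD)
next
  assume finite_hyper: "\<forall>\<K>. compactin (vietoris X) \<K> \<longrightarrow> finite \<K>"
  show "\<forall>K. compactin X K \<longrightarrow> finite K"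
  proof (intro allI impI)
    fix K assume "compactin X K"
    then have "finite ((\<lambda>x. {x}) ` K)"
      using finite_hyper image_compactin continuous_map_singleton_vietoris by blast
    then show "finite K"
      by (rule finite_imageD) (simp add: inj_on_def)
  qed
qed

end
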